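(* Consider the asymmetric information disclosure game with preference disclosure policy $\psi$, information disclosure policy $\gamma$, and estimation policy $\eta$. Suppose that: (A) the receiver uses an MPPD policy $\psi^\star$ parameterized by thresholds $(\theta^\star_{1,2},\ldots,\theta^\star_{n-1,n})$, with $\theta^\star_{0,1}=0$ and $\theta^\star_{n,n+1}=1$; (B) the platform uses a monotone WQD policy $\gamma^\star$ parameterized by weights $(w^\star_1,\ldots,w^\star_n)$ with $w^\star_1<\cdots<w^\star_n$; (C) the receiver uses the estimation policy $\eta^\star(y,m)=(x_1,\mu_1)$ if $y=(1,x_1)$ and $\eta^\star(y,m)=(\mu_2,x_2)$ if $y=(2,x_2)$. Then $(\psi^\star,\gamma^\star,\eta^\star)$ constitute a Bayesian Nash Equilibrium if the following conditions hold: (C1) for each interior partition threshold, $L(w^\star_m \mid \theta^\star_{m,m+1})=L(w^\star_{m+1}\mid \theta^\star_{m,m+1})$, $1\le m<n$; (C2) for each $m\in[n]$, $w^\star_m=\mathbf{E}\big[\Theta \mid \theta^\star_{m-1,m}<\Theta<\theta^\star_{m,m+1}\big]$.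
   Context: Setting: $X_1,X_2$ are independent real random variables with densities symmetric around their means $\mu_1,\mu_2$ and full support on $\mathbb{R}$; the receiver's private preference $\Theta$ is independent of $(X_1,X_2)$, supported on $[0,1]$ with smooth prior density $\pi$. The receiver observes $\Theta=\theta$ and sends a message $m=\psi(\theta)\in[n]=\{1,\ldots,n\}$. The platform observes $(x_1,x_2,m)$ and chooses $s=\gamma(m,x_1,x_2)\in\{1,2\}$, sending $y=(s,x_s)$. The receiver outputs estimates $(\hat x_1,\hat x_2)=\eta(y,m)$, equal to $x_s$ for the disclosed variable and the conditional expectation $\mathbf{E}[X_i\mid m,y]$ for the other. Both agents share the loss $\ell=\theta(x_1-\hat x_1)^2+(1-\theta)(x_2-\hat x_2)^2$; the receiver minimizes $\mathbf{E}[\ell\mid\Theta=\theta]$ over $m$, the platform minimizes $\mathbf{E}[\ell\mid X_1=x_1,X_2=x_2,M=m]$ over $s$. A Bayesian Nash Equilibrium (BNE) is a triple $(\psi^\star,\gamma^\star,\eta^\star)$ such that $\psi^\star(\theta)$ minimizes the receiver's expected loss for every $\theta$ given $(\gamma^\star,\eta^\star)$, $\gamma^\star(m,x_1,x_2)$ minimizes the platform's expected loss for every $(m,x_1,x_2)$ given $(\psi^\star,\eta^\star)$, and $\eta^\star$ is consistent (Bayes) with the policies. A weighted-quadratic disclosure (WQD) policy with weights $w_m\in[0,1]$ is $\gamma(m,x_1,x_2)=1$ if $w_m(x_1-\mu_1)^2>(1-w_m)(x_2-\mu_2)^2$ and $=2$ otherwise. A monotone partition preference disclosure (MPPD) policy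 has thresholds $0=\theta^\star_{0,1}<\theta^\star_{1,2}<\cdots<\theta^\star_{n,n+1}=1$ with $\psi(\theta)=m$ for $\theta\in(\theta^\star_{m-1,m},\theta^\star_{m,m+1})$. The receiver's expected loss under a WQD weight $w$ and estimator $\eta^\star$ is $L(w\mid\theta):=\theta\,\mathbf{E}\big[(X_1-\mu_1)^2\mathbf{1}\big((1-w)(X_2-\mu_2)^2\ge w(X_1-\mu_1)^2\big)\big]+(1-\theta)\,\mathbf{E}\big[(X_2-\mu_2)^2\mathbf{1}\big((1-w)(X_2-\mu_2)^2<w(X_1-\mu_1)^2\big)\big]$. *)

theory Defs
  imports "HOL-Analysis.Analysis"
begin

definition smooth_on :: "real set \<Rightarrow> (real \<Rightarrow> real) \<Rightarrow> bool" where
  "smooth_on S g \<longleftrightarrow> (\<exists>D :: nat \<Rightarrow> real \<Rightarrow> real. (\<forall>x\<in>S. D 0 x = g x) \<and>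
     (\<forall>k. \<forall>x\<in>S. (D k has_real_derivative D (Suc k) x) (at x within S)))"

definition sym_full_density :: "(real \<Rightarrow> real) \<Rightarrow> real \<Rightarrow> bool" where
  "sym_full_density f mu \<longleftrightarrow>
     f \<in> borel_measurable lborel \<and> (\<forall>x. 0 \<le> f x) \<and>
     integrable lborel f \<and> (LINT x|lborel. f x) = 1 \<and>
     (\<forall>t. f (mu + t) = f (mu - t)) \<and>
     (\<forall>a b. a < b \<longrightarrow> (LINT x:{a<..<b}|lborel. f x) > 0)"

definition prior_density :: "(real \<Rightarrow> real) \<Rightarrow> bool" where
  "prior_density p \<longleftrightarrow>
     p \<in> borel_measurable lborel \<and> (\<forall>x\<in>{0..1}. 0 \<le> p x) \<and>
     set_integrable lborel {0..1} p \<and> (LINT x:{0..1}|lborel. p x) = 1 \<and>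
     smooth_on {0..1} p"

definition loss :: "real \<Rightarrow> real \<Rightarrow> real \<Rightarrow> real \<times> real \<Rightarrow> real" where
  "loss \<theta> x1 x2 e = \<theta> * (x1 - fst e)\<^sup>2 + (1 - \<theta>) * (x2 - snd e)\<^sup>2"

definition disclose :: "nat \<Rightarrow> real \<Rightarrow> real \<Rightarrow> nat \<times> real" where
  "disclose s x1 x2 = (s, if s = 1 then x1 else x2)"

definition recv_loss ::
  "(real \<Rightarrow> real) \<Rightarrow> (real \<Rightarrow> real) \<Rightarrow> (nat \<Rightarrow> real \<Rightarrow> real \<Rightarrow> nat)
   \<Rightarrow> (nat \<times> real \<Rightarrow> nat \<Rightarrow> real \<times> real) \<Rightarrow> real \<Rightarrow> nat \<Rightarrow> real" where
  "recv_loss f1 f2 \<gamma> \<eta> \<theta> m =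
     (LINT x1|lborel. LINT x2|lborel.
        f1 x1 * f2 x2 * loss \<theta> x1 x2 (\<eta> (disclose (\<gamma> m x1 x2) x1 x2) m))"

definition plat_loss ::
  "(real \<Rightarrow> real) \<Rightarrow> (real \<Rightarrow> nat) \<Rightarrow> (nat \<times> real \<Rightarrow> nat \<Rightarrow> real \<times> real)
   \<Rightarrow> nat \<Rightarrow> real \<Rightarrow> real \<Rightarrow> nat \<Rightarrow> real" where
  "plat_loss p \<psi> \<eta> m x1 x2 s =
     (LINT \<theta>:{\<theta>\<in>{0..1}. \<psi> \<theta> = m}|lborel. p \<theta> * loss \<theta> x1 x2 (\<eta> (disclose s x1 x2) m))
     / (LINT \<theta>:{\<theta>\<in>{0..1}. \<psi> \<theta> = m}|lborel. p \<theta>)"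

text \<open>Bayes consistency of the estimator: disclosed coordinate is reported exactly,
  the undisclosed one is the conditional mean E[X_i | M = m, Y = y] (whenever the
  conditioning event has positive conditional probability; X independent of Theta).\<close>
definition bayes_consistent ::
  "nat \<Rightarrow> (real \<Rightarrow> real) \<Rightarrow> (real \<Rightarrow> real) \<Rightarrow> (nat \<Rightarrow> real \<Rightarrow> real \<Rightarrow> nat)
   \<Rightarrow> (nat \<times> real \<Rightarrow> nat \<Rightarrow> real \<times> real) \<Rightarrow> bool" where
  "bayes_consistent n f1 f2 \<gamma> \<eta> \<longleftrightarrow>
     (\<forall>m\<in>{1..n}. \<forall>x1 x2.
        fst (\<eta> (1, x1) m) = x1 \<and> snd (\<eta> (2, x2) m) = x2 \<and>
        ((LINT t:{t. \<gamma> m x1 t = 1}|lborel. f2 t) > 0 \<longrightarrow>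
           snd (\<eta> (1, x1) m) = (LINT t:{t. \<gamma> m x1 t = 1}|lborel. t * f2 t)
                                / (LINT t:{t. \<gamma> m x1 t = 1}|lborel. f2 t)) \<and>
        ((LINT t:{t. \<gamma> m t x2 = 2}|lborel. f1 t) > 0 \<longrightarrow>
           fst (\<eta> (2, x2) m) = (LINT t:{t. \<gamma> m t x2 = 2}|lborel. t * f1 t)
                                / (LINT t:{t. \<gamma> m t x2 = 2}|lborel. f1 t)))"

definition bne ::
  "nat \<Rightarrow> (real \<Rightarrow> real) \<Rightarrow> (real \<Rightarrow> real) \<Rightarrow> (real \<Rightarrow> real)
   \<Rightarrow> (real \<Rightarrow> nat) \<Rightarrow> (nat \<Rightarrow> real \<Rightarrow> real \<Rightarrow> nat)
   \<Rightarrow> (nat \<times> real \<Rightarrow> nat \<Rightarrow> real \<times> real) \<Rightarrow> bool" where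
  "bne n f1 f2 p \<psi> \<gamma> \<eta> \<longleftrightarrow>
     (\<forall>\<theta>\<in>{0..1}. \<psi> \<theta> \<in> {1..n} \<and>
        (\<forall>m\<in>{1..n}. recv_loss f1 f2 \<gamma> \<eta> \<theta> (\<psi> \<theta>) \<le> recv_loss f1 f2 \<gamma> \<eta> \<theta> m)) \<and>
     (\<forall>m\<in>{1..n}. \<forall>x1 x2. \<gamma> m x1 x2 \<in> {1, 2} \<and>
        (\<forall>s\<in>{1::nat, 2}. plat_loss p \<psi> \<eta> m x1 x2 (\<gamma> m x1 x2) \<le> plat_loss p \<psi> \<eta> m x1 x2 s)) \<and>
     bayes_consistent n f1 f2 \<gamma> \<eta>"

text \<open>Monotone partition preference disclosure: thresholds thr 0 = 0 < thr 1 < ... < thr n = 1,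
  where thr m is theta*_{m,m+1}; psi theta = m on the open cell (thr (m-1), thr m).
  At the (measure zero) cell boundaries psi picks one of the adjacent cells.\<close>
definition mppd :: "nat \<Rightarrow> (nat \<Rightarrow> real) \<Rightarrow> (real \<Rightarrow> nat) \<Rightarrow> bool" where
  "mppd n thr \<psi> \<longleftrightarrow>
     thr 0 = 0 \<and> thr n = 1 \<and> (\<forall>i<n. thr i < thr (Suc i)) \<and>
     (\<forall>m\<in>{1..n}. \<forall>\<theta>. thr (m - 1) < \<theta> \<and> \<theta> < thr m \<longrightarrow> \<psi> \<theta> = m) \<and>
     (\<forall>\<theta>\<in>{0..1}. \<psi> \<theta> \<in> {1..n} \<and> thr (\<psi> \<theta> - 1) \<le> \<theta> \<and> \<theta> \<le> thr (\<psi> \<theta>))"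

definition wqd :: "real \<Rightarrow> real \<Rightarrow> (nat \<Rightarrow> real) \<Rightarrow> nat \<Rightarrow> real \<Rightarrow> real \<Rightarrow> nat" where
  "wqd mu1 mu2 w m x1 x2 =
     (if w m * (x1 - mu1)\<^sup>2 > (1 - w m) * (x2 - mu2)\<^sup>2 then 1 else 2)"

definition eta_star :: "real \<Rightarrow> real \<Rightarrow> nat \<times> real \<Rightarrow> nat \<Rightarrow> real \<times> real" where
  "eta_star mu1 mu2 y m = (if fst y = 1 then (snd y, mu2) else (mu1, snd y))"

definition Lw :: "(real \<Rightarrow> real) \<Rightarrow> (real \<Rightarrow> real) \<Rightarrow> real \<Rightarrow> real \<Rightarrow> real \<Rightarrow> real \<Rightarrow> real" where
  "Lw f1 f2 mu1 mu2 w \<theta> =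
     \<theta> * (LINT x1|lborel. LINT x2|lborel. f1 x1 * f2 x2 * ((x1 - mu1)\<^sup>2 *
           (if (1 - w) * (x2 - mu2)\<^sup>2 \<ge> w * (x1 - mu1)\<^sup>2 then 1 else 0)))
   + (1 - \<theta>) * (LINT x1|lborel. LINT x2|lborel. f1 x1 * f2 x2 * ((x2 - mu2)\<^sup>2 *
           (if (1 - w) * (x2 - mu2)\<^sup>2 < w * (x1 - mu1)\<^sup>2 then 1 else 0)))"

end

theory Submission
  imports Defs
begin

(*
  Under eta_star, sending message m costs the receiver L(w_m | theta) = theta * L(w_m | 1)
  + (1 - theta) * L(w_m | 0), an affine function of theta. Raising the weight w shrinks the
  event on which X1 is hidden and enlarges the one on which X2 is hidden, so L(w | 1) decreases
  and L(w | 0) increases in w; with increasing weights the slopes of these lines decrease in m.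
  By (C1) consecutive lines cross at the thresholds, so on the m-th cell the m-th line is the
  lower envelope. The platform's posterior loss is (1 - E[Theta | m]) (x2 - mu2)^2 for
  disclosing X1 and E[Theta | m] (x1 - mu1)^2 for disclosing X2, so by (C2) the WQD rule picks
  the smaller one. Finally, the WQD regions and the densities are symmetric about the means, so
  the conditional mean of the undisclosed coordinate is its mean and eta_star is Bayes.
*)

lemma (in pair_sigma_finite) integrable_mult_fst_snd:
  fixes u :: "'a \<Rightarrow> real" and v :: "'b \<Rightarrow> real"
  assumes u: "integrable M1 u" and v: "integrable M2 v"
  shows "integrable (M1 \<Otimes>\<^sub>M M2) (\<lambda>z. u (fst z) * v (snd z))"
proof (rule Fubini_integrable)
  have [measurable]: "u \<in> borel_measurable M1" "v \<in> borel_measurable M2" using u v by auto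
  show "(\<lambda>z. u (fst z) * v (snd z)) \<in> borel_measurable (M1 \<Otimes>\<^sub>M M2)" by measurable
  have "integrable M1 (\<lambda>x. \<bar>u x\<bar> * (\<integral>y. \<bar>v y\<bar> \<partial>M2))"
    using u by (intro integrable_mult_left integrable_abs)
  then show "integrable M1 (\<lambda>x. \<integral>y. norm (u (fst (x, y)) * v (snd (x, y))) \<partial>M2)"
    by (simp add: abs_mult)
  show "AE x in M1. integrable M2 (\<lambda>y. u (fst (x, y)) * v (snd (x, y)))"
    using v by simp
qed

lemma integrable_moments_of_second_moment:
  fixes f :: "real \<Rightarrow> real"
  assumes f: "integrable lborel f" and f2: "integrable lborel (\<lambda>x. x\<^sup>2 * f x)"
  shows "integrable lborel (\<lambda>x. x * f x)" "integrable lborel (\<lambda>x. (x - c)\<^sup>2 * f x)"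
proof -
  have [measurable]: "f \<in> borel_measurable lborel" using f by auto
  show f1: "integrable lborel (\<lambda>x. x * f x)"
  proof (rule Bochner_Integration.integrable_bound)
    show "integrable lborel (\<lambda>x. \<bar>f x\<bar> + \<bar>x\<^sup>2 * f x\<bar>)" using f f2 by auto
    have "\<bar>x\<bar> * \<bar>f x\<bar> \<le> (1 + x\<^sup>2) * \<bar>f x\<bar>" for x :: real
      using sum_squares_bound[of 1 "\<bar>x\<bar>"] by (intro mult_right_mono) (auto simp: power2_eq_square)
    then show "AE x in lborel. norm (x * f x) \<le> norm (\<bar>f x\<bar> + \<bar>x\<^sup>2 * f x\<bar>)"
      by (simp add: abs_mult distrib_right)
  qed measurable
  have "(\<lambda>x. (x - c)\<^sup>2 * f x) = (\<lambda>x. x\<^sup>2 * f x - 2 * c * (x * f x) + c\<^sup>2 * f x)"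
    by (auto simp: power2_diff algebra_simps)
  then show "integrable lborel (\<lambda>x. (x - c)\<^sup>2 * f x)"
    using f f1 f2 by simp
qed

lemma set_integral_mult_id_symmetric:
  fixes f :: "real \<Rightarrow> real"
  assumes f: "integrable lborel f" and tf: "integrable lborel (\<lambda>t. t * f t)"
    and f_sym: "\<And>t. f (c + t) = f (c - t)"
    and S[measurable]: "S \<in> sets borel" and S_sym: "\<And>t. 2 * c - t \<in> S \<longleftrightarrow> t \<in> S"
  shows "(LINT t:S|lborel. t * f t) = c * (LINT t:S|lborel. f t)"
proof -
  have S_lborel: "S \<in> sets lborel" by simp
  define h where "h t = indicator S t * ((t - c) * f t)" for t
  have h_odd: "h (2 * c - t) = - h t" for t
    using f_sym[of "c - t"] S_sym[of t] by (simp add: h_def indicator_def algebra_simps)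
  have "integral\<^sup>L lborel h = \<bar>-1\<bar> *\<^sub>R (\<integral>t. h (2 * c + (-1) * t) \<partial>lborel)"
    by (rule lborel_integral_real_affine) simp
  also have "\<dots> = - integral\<^sup>L lborel h"
    using h_odd by simp
  finally have "integral\<^sup>L lborel h = 0"
    by simp
  moreover have "h = (\<lambda>t. indicator S t * (t * f t) - c * (indicator S t * f t))"
    by (auto simp: h_def algebra_simps)
  then have "integral\<^sup>L lborel h = (LINT t:S|lborel. t * f t) - c * (LINT t:S|lborel. f t)"
    using integrable_mult_indicator[OF S_lborel f] integrable_mult_indicator[OF S_lborel tf]
    by (simp add: set_lebesgue_integral_def)
  ultimately show ?thesis
    by simp
qed

lemma affine_lower_envelope:
  fixes a b thr :: "nat \<Rightarrow> real"
  assumes slope: "\<And>k. k \<in> {1..<n} \<Longrightarrow> a (Suc k) - b (Suc k) \<le> a k - b k"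
    and cross: "\<And>k. k \<in> {1..<n} \<Longrightarrow>
      thr k * a k + (1 - thr k) * b k = thr k * a (Suc k) + (1 - thr k) * b (Suc k)"
    and above: "\<And>k. k \<in> {j..<n} \<Longrightarrow> \<theta> \<le> thr k"
    and below: "\<And>k. k \<in> {1..<j} \<Longrightarrow> thr k \<le> \<theta>"
    and j: "j \<in> {1..n}" and m: "m \<in> {1..n}"
  shows "\<theta> * a j + (1 - \<theta>) * b j \<le> \<theta> * a m + (1 - \<theta>) * b m"
proof -
  define L where "L k = \<theta> * a k + (1 - \<theta>) * b k" for k
  have L_step: "L (Suc k) - L k = (\<theta> - thr k) * ((a (Suc k) - b (Suc k)) - (a k - b k))"
    if "k \<in> {1..<n}" for k
    using cross[OF that] by (simp add: L_def algebra_simps)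
  show ?thesis
  proof (cases "j \<le> m")
    case True
    then have "L j \<le> L m"
    proof (induction m rule: dec_induct)
      case (step k)
      with j m have k: "k \<in> {1..<n}" "k \<in> {j..<n}" by auto
      have "0 \<le> (\<theta> - thr k) * ((a (Suc k) - b (Suc k)) - (a k - b k))"
        using above[OF k(2)] slope[OF k(1)] by (intro mult_nonpos_nonpos) auto
      with step.IH L_step[OF k(1)] show ?case by simp
    qed simp
    then show ?thesis by (simp add: L_def)
  next
    case False
    then have "m \<le> j" by simp
    then have "L j \<le> L m"
    proof (induction m rule: inc_induct)
      case (step k)
      with j m have k: "k \<in> {1..<n}" "k \<in> {1..<j}" by auto
      have "(\<theta> - thr k) * ((a (Suc k) - b (Suc k)) - (a k - b k)) \<le> 0"
        using below[OF k(2)] slope[OF k(1)] by (intro mult_nonneg_nonpos) auto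
      with step.IH L_step[OF k(1)] show ?case by simp
    qed simp
    then show ?thesis by (simp add: L_def)
  qed
qed

lemma mppd_thr_mono:
  assumes "mppd n thr \<psi>" "i \<le> k" "k \<le> n"
  shows "thr i \<le> thr k"
  using assms(2,3)
proof (induction k rule: dec_induct)
  case (step k)
  with assms(1) show ?case
    unfolding mppd_def by (meson Suc_le_lessD less_imp_le order_trans)
qed simp

lemma mppd_open_cell:
  assumes "mppd n thr \<psi>" "m \<in> {1..n}" "\<theta> \<in> {thr (m - 1)<..<thr m}"
  shows "\<psi> \<theta> = m"
  using assms unfolding mppd_def by auto

lemma mppd_closed_cell:
  assumes "mppd n thr \<psi>" "\<theta> \<in> {0..1}"
  shows "\<psi> \<theta> \<in> {1..n}" "thr (\<psi> \<theta> - 1) \<le> \<theta>" "\<theta> \<le> thr (\<psi> \<theta>)"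
  using assms unfolding mppd_def by auto


lemma mppd_open_cell_subset:
  assumes "mppd n thr \<psi>" "m \<in> {1..n}"
  shows "{thr (m - 1)<..<thr m} \<subseteq> {0..1}"
proof -
  have "thr 0 \<le> thr (m - 1)" "thr m \<le> thr n"
    using mppd_thr_mono[OF assms(1)] assms(2) by auto
  with assms(1) show ?thesis
    unfolding mppd_def by auto
qed

lemma Lw_affine:
  "Lw f1 f2 mu1 mu2 w \<theta> = \<theta> * Lw f1 f2 mu1 mu2 w 1 + (1 - \<theta>) * Lw f1 f2 mu1 mu2 w 0"
  by (simp add: Lw_def)

lemma wqd_hides_first_antimono:
  fixes a b w w' :: real
  assumes "w \<le> w'" "0 \<le> a" "0 \<le> b" "w' * a \<le> (1 - w') * b"
  shows "w * a \<le> (1 - w) * b"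
proof -
  have "0 \<le> (w' - w) * (a + b)" using assms(1-3) by simp
  with assms(4) show ?thesis by (simp add: algebra_simps)
qed

locale signal_densities =
  fixes f1 f2 :: "real \<Rightarrow> real" and mu1 mu2 :: real
  assumes nonneg1: "\<And>x. 0 \<le> f1 x" and nonneg2: "\<And>x. 0 \<le> f2 x"
    and integrable1: "integrable lborel f1" and integrable2: "integrable lborel f2"
    and variance1: "integrable lborel (\<lambda>x. (x - mu1)\<^sup>2 * f1 x)"
    and variance2: "integrable lborel (\<lambda>x. (x - mu2)\<^sup>2 * f2 x)"
begin

lemma measurable_densities[measurable]:
  "f1 \<in> borel_measurable lborel" "f2 \<in> borel_measurable lborel"
  using integrable1 integrable2 by auto

definition hidden1_loss :: "real \<Rightarrow> real \<times> real \<Rightarrow> real" where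
  "hidden1_loss w z = f1 (fst z) * f2 (snd z) * ((fst z - mu1)\<^sup>2 *
     (if (1 - w) * (snd z - mu2)\<^sup>2 \<ge> w * (fst z - mu1)\<^sup>2 then 1 else 0))"

definition hidden2_loss :: "real \<Rightarrow> real \<times> real \<Rightarrow> real" where
  "hidden2_loss w z = f1 (fst z) * f2 (snd z) * ((snd z - mu2)\<^sup>2 *
     (if (1 - w) * (snd z - mu2)\<^sup>2 < w * (fst z - mu1)\<^sup>2 then 1 else 0))"

lemma measurable_hidden1_loss[measurable]:
  "hidden1_loss w \<in> borel_measurable (lborel \<Otimes>\<^sub>M lborel)"
  unfolding hidden1_loss_def by measurable

lemma measurable_hidden2_loss[measurable]:
  "hidden2_loss w \<in> borel_measurable (lborel \<Otimes>\<^sub>M lborel)"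
  unfolding hidden2_loss_def by measurable

lemma integrable_hidden1_loss: "integrable (lborel \<Otimes>\<^sub>M lborel) (hidden1_loss w)"
proof (rule Bochner_Integration.integrable_bound)
  show "integrable (lborel \<Otimes>\<^sub>M lborel) (\<lambda>z. (fst z - mu1)\<^sup>2 * f1 (fst z) * f2 (snd z))"
    using lborel_pair.integrable_mult_fst_snd[OF variance1 integrable2] by simp
  show "AE z in lborel \<Otimes>\<^sub>M lborel.
      norm (hidden1_loss w z) \<le> norm ((fst z - mu1)\<^sup>2 * f1 (fst z) * f2 (snd z))"
    using nonneg1 nonneg2 by (auto simp: hidden1_loss_def abs_mult)
qed measurable

lemma integrable_hidden2_loss: "integrable (lborel \<Otimes>\<^sub>M lborel) (hidden2_loss w)"
proof (rule Bochner_Integration.integrable_bound)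
  show "integrable (lborel \<Otimes>\<^sub>M lborel) (\<lambda>z. f1 (fst z) * ((snd z - mu2)\<^sup>2 * f2 (snd z)))"
    using lborel_pair.integrable_mult_fst_snd[OF integrable1 variance2] by simp
  show "AE z in lborel \<Otimes>\<^sub>M lborel.
      norm (hidden2_loss w z) \<le> norm (f1 (fst z) * ((snd z - mu2)\<^sup>2 * f2 (snd z)))"
    using nonneg1 nonneg2 by (auto simp: hidden2_loss_def abs_mult)
qed measurable

lemma Lw_eq_integral:
  "Lw f1 f2 mu1 mu2 w \<theta> = \<theta> * (\<integral>z. hidden1_loss w z \<partial>(lborel \<Otimes>\<^sub>M lborel))
     + (1 - \<theta>) * (\<integral>z. hidden2_loss w z \<partial>(lborel \<Otimes>\<^sub>M lborel))"
proof -
  have "(LINT x1|lborel. LINT x2|lborel. hidden1_loss w (x1, x2))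
      = (\<integral>z. hidden1_loss w z \<partial>(lborel \<Otimes>\<^sub>M lborel))"
    "(LINT x1|lborel. LINT x2|lborel. hidden2_loss w (x1, x2))
      = (\<integral>z. hidden2_loss w z \<partial>(lborel \<Otimes>\<^sub>M lborel))"
    using integrable_hidden1_loss integrable_hidden2_loss by (simp_all add: lborel_pair.integral_fst')
  then show ?thesis
    by (simp add: Lw_def hidden1_loss_def hidden2_loss_def)
qed

lemma Lw_1_antimono:
  assumes "w \<le> w'"
  shows "Lw f1 f2 mu1 mu2 w' 1 \<le> Lw f1 f2 mu1 mu2 w 1"
proof -
  have "hidden1_loss w' z \<le> hidden1_loss w z" for z
    using nonneg1 nonneg2 wqd_hides_first_antimono[OF assms]
    by (auto simp: hidden1_loss_def intro!: mult_left_mono)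
  then show ?thesis
    by (simp add: Lw_eq_integral integral_mono integrable_hidden1_loss)
qed

lemma Lw_0_mono:
  assumes "w \<le> w'"
  shows "Lw f1 f2 mu1 mu2 w 0 \<le> Lw f1 f2 mu1 mu2 w' 0"
proof -
  have "hidden2_loss w z \<le> hidden2_loss w' z" for z
    using nonneg1 nonneg2
      wqd_hides_first_antimono[OF assms, of "(fst z - mu1)\<^sup>2" "(snd z - mu2)\<^sup>2"]
    by (auto simp: hidden2_loss_def intro!: mult_left_mono)
  then show ?thesis
    by (simp add: Lw_eq_integral integral_mono integrable_hidden2_loss)
qed

lemma recv_loss_wqd_eta_star:
  "recv_loss f1 f2 (wqd mu1 mu2 w) (eta_star mu1 mu2) \<theta> m = Lw f1 f2 mu1 mu2 (w m) \<theta>"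
proof -
  let ?G = "\<lambda>z. \<theta> * hidden1_loss (w m) z + (1 - \<theta>) * hidden2_loss (w m) z"
  have "f1 x1 * f2 x2 * loss \<theta> x1 x2 (eta_star mu1 mu2 (disclose (wqd mu1 mu2 w m x1 x2) x1 x2) m)
      = ?G (x1, x2)" for x1 x2
    by (simp add: hidden1_loss_def hidden2_loss_def loss_def eta_star_def disclose_def wqd_def)
  then have "recv_loss f1 f2 (wqd mu1 mu2 w) (eta_star mu1 mu2) \<theta> m
      = (LINT x1|lborel. LINT x2|lborel. ?G (x1, x2))"
    by (simp add: recv_loss_def)
  also have "\<dots> = (\<integral>z. ?G z \<partial>(lborel \<Otimes>\<^sub>M lborel))"
    using integrable_hidden1_loss integrable_hidden2_loss by (intro lborel_pair.integral_fst') auto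
  also have "\<dots> = Lw f1 f2 mu1 mu2 (w m) \<theta>"
    using integrable_hidden1_loss integrable_hidden2_loss by (simp add: Lw_eq_integral)
  finally show ?thesis .
qed

lemma mppd_best_response:
  assumes A: "mppd n thr \<psi>" and \<theta>: "\<theta> \<in> {0..1}" and m: "m \<in> {1..n}"
    and w_mono: "\<And>k. k \<in> {1..<n} \<Longrightarrow> w k \<le> w (Suc k)"
    and indifferent: "\<And>k. k \<in> {1..<n} \<Longrightarrow>
      Lw f1 f2 mu1 mu2 (w k) (thr k) = Lw f1 f2 mu1 mu2 (w (Suc k)) (thr k)"
  shows "recv_loss f1 f2 (wqd mu1 mu2 w) (eta_star mu1 mu2) \<theta> (\<psi> \<theta>)
    \<le> recv_loss f1 f2 (wqd mu1 mu2 w) (eta_star mu1 mu2) \<theta> m"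
proof -
  note j = mppd_closed_cell[OF A \<theta>]
  let ?a = "\<lambda>k. Lw f1 f2 mu1 mu2 (w k) 1" and ?b = "\<lambda>k. Lw f1 f2 mu1 mu2 (w k) 0"
  have "\<theta> * ?a (\<psi> \<theta>) + (1 - \<theta>) * ?b (\<psi> \<theta>) \<le> \<theta> * ?a m + (1 - \<theta>) * ?b m"
  proof (rule affine_lower_envelope[OF _ _ _ _ j(1) m])
    show "?a (Suc k) - ?b (Suc k) \<le> ?a k - ?b k" if "k \<in> {1..<n}" for k
      using Lw_1_antimono[OF w_mono[OF that]] Lw_0_mono[OF w_mono[OF that]] by linarith
    show "thr k * ?a k + (1 - thr k) * ?b k = thr k * ?a (Suc k) + (1 - thr k) * ?b (Suc k)"
      if "k \<in> {1..<n}" for k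
      using indifferent[OF that] by (simp add: Lw_affine[symmetric])
    show "\<theta> \<le> thr k" if "k \<in> {\<psi> \<theta>..<n}" for k
      using j(3) mppd_thr_mono[OF A, of "\<psi> \<theta>" k] that by auto
    show "thr k \<le> \<theta>" if "k \<in> {1..<\<psi> \<theta>}" for k
      using j(1,2) mppd_thr_mono[OF A, of k "\<psi> \<theta> - 1"] that by fastforce
  qed
  then show ?thesis
    by (simp add: recv_loss_wqd_eta_star Lw_affine[symmetric])
qed

end

lemma set_integral_mppd_message:
  fixes g :: "real \<Rightarrow> 'a::{banach, second_countable_topology}"
  assumes A: "mppd n thr \<psi>" and m: "m \<in> {1..n}"
    and g[measurable]: "g \<in> borel_measurable lborel"
  shows "(LINT \<theta>:{\<theta>\<in>{0..1}. \<psi> \<theta> = m}|lborel. g \<theta>)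
    = (LINT \<theta>:{thr (m - 1)<..<thr m}|lborel. g \<theta>)"
proof (rule set_integral_cong_set)
  let ?U = "{\<theta>\<in>{0..1}. \<psi> \<theta> = m}" and ?I = "{thr (m - 1)<..<thr m}"
  have "?I \<subseteq> ?U"
    using mppd_open_cell[OF A m] mppd_open_cell_subset[OF A m] by auto
  moreover have "?U \<subseteq> ?I \<union> {thr (m - 1), thr m}"
    using mppd_closed_cell[OF A] by fastforce
  ultimately have U_eq: "?U = ?I \<union> (?U \<inter> {thr (m - 1), thr m})"
    by blast
  have "?I \<union> (?U \<inter> {thr (m - 1), thr m}) \<in> sets borel"
    by (intro sets.Un borel_open borel_closed finite_imp_closed) auto
  then have [measurable]: "?U \<in> sets borel"
    by (subst U_eq)
  show "set_borel_measurable lborel ?I g" "set_borel_measurable lborel ?U g"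
    unfolding set_borel_measurable_def by measurable
  have "AE x in lborel. x \<noteq> thr (m - 1)" "AE x in lborel. x \<noteq> thr m"
    by (rule AE_lborel_singleton)+
  then show "AE x in lborel. (x \<in> ?I) = (x \<in> ?U)"
    by eventually_elim (use U_eq in blast)
qed

lemma plat_loss_eta_star:
  assumes prior: "prior_density p" and A: "mppd n thr \<psi>" and m: "m \<in> {1..n}"
  defines "D \<equiv> LINT \<theta>:{thr (m - 1)<..<thr m}|lborel. p \<theta>"
    and "N \<equiv> LINT \<theta>:{thr (m - 1)<..<thr m}|lborel. \<theta> * p \<theta>"
  shows "plat_loss p \<psi> (eta_star mu1 mu2) m x1 x2 s
    = (if s = 1 then (D - N) * (x2 - mu2)\<^sup>2 else N * (x1 - mu1)\<^sup>2) / D"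
proof -
  let ?I = "{thr (m - 1)<..<thr m}"
  have p_measurable[measurable]: "p \<in> borel_measurable lborel"
    and p_nonneg: "\<And>x. x \<in> {0..1} \<Longrightarrow> 0 \<le> p x"
    and p_int: "set_integrable lborel {0..1} p"
    using prior unfolding prior_density_def by auto
  note I_unit = mppd_open_cell_subset[OF A m]
  have p_I: "set_integrable lborel ?I p"
    by (rule set_integrable_subset[OF p_int _ I_unit]) simp
  moreover have "set_integrable lborel ?I (\<lambda>\<theta>. \<theta> * p \<theta>)"
  proof (rule set_integrable_bound[OF p_I])
    show "set_borel_measurable lborel ?I (\<lambda>\<theta>. \<theta> * p \<theta>)"
      unfolding set_borel_measurable_def by measurable
    show "AE \<theta> in lborel. \<theta> \<in> ?I \<longrightarrow> norm (\<theta> * p \<theta>) \<le> norm (p \<theta>)"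
      using I_unit by (intro AE_I2) (auto simp: abs_mult intro!: mult_left_le_one_le)
  qed
  ultimately have "(LINT \<theta>:?I|lborel. p \<theta> - \<theta> * p \<theta>) = D - N"
    by (simp add: D_def N_def set_integral_diff)
  moreover have "p \<theta> * loss \<theta> x1 x2 (eta_star mu1 mu2 (disclose s x1 x2) m)
    = (if s = 1 then (p \<theta> - \<theta> * p \<theta>) * (x2 - mu2)\<^sup>2 else (\<theta> * p \<theta>) * (x1 - mu1)\<^sup>2)" for \<theta>
    by (simp add: loss_def eta_star_def disclose_def algebra_simps)
  ultimately have "(LINT \<theta>:?I|lborel. p \<theta> * loss \<theta> x1 x2 (eta_star mu1 mu2 (disclose s x1 x2) m))
    = (if s = 1 then (D - N) * (x2 - mu2)\<^sup>2 else N * (x1 - mu1)\<^sup>2)"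
    by (simp add: N_def)
  moreover have loss_measurable: "(\<lambda>\<theta>. p \<theta> * loss \<theta> x1 x2 e) \<in> borel_measurable lborel" for e
    unfolding loss_def by measurable
  ultimately show ?thesis
    unfolding plat_loss_def set_integral_mppd_message[OF A m loss_measurable]
      set_integral_mppd_message[OF A m p_measurable] D_def
    by simp
qed

lemma wqd_best_response:
  assumes prior: "prior_density p" and A: "mppd n thr \<psi>" and m: "m \<in> {1..n}"
    and w_m: "w m = (LINT \<theta>:{thr (m - 1)<..<thr m}|lborel. \<theta> * p \<theta>)
                   / (LINT \<theta>:{thr (m - 1)<..<thr m}|lborel. p \<theta>)"
  shows "plat_loss p \<psi> (eta_star mu1 mu2) m x1 x2 (wqd mu1 mu2 w m x1 x2)
    \<le> plat_loss p \<psi> (eta_star mu1 mu2) m x1 x2 s"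
proof -
  define D where "D = (LINT \<theta>:{thr (m - 1)<..<thr m}|lborel. p \<theta>)"
  define N where "N = (LINT \<theta>:{thr (m - 1)<..<thr m}|lborel. \<theta> * p \<theta>)"
  note loss_formula = plat_loss_eta_star[OF prior A m, folded D_def N_def]
  have "0 \<le> D"
    using prior mppd_open_cell_subset[OF A m]
    unfolding D_def prior_density_def set_lebesgue_integral_def
    by (intro Bochner_Integration.integral_nonneg) (auto simp: indicator_def)
  show ?thesis
  proof (cases "D = 0")
    case True
    \<comment> \<open>x / 0 = 0 makes every disclosure cost 0 on a cell of prior mass 0.\<close>
    then show ?thesis by (simp add: loss_formula)
  next
    case False
    with \<open>0 \<le> D\<close> have "(D - N) / D = 1 - w m" "N / D = w m"
      by (simp_all add: w_m D_def N_def diff_divide_distrib)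
    then have "plat_loss p \<psi> (eta_star mu1 mu2) m x1 x2 s'
        = (if s' = 1 then (1 - w m) * (x2 - mu2)\<^sup>2 else w m * (x1 - mu1)\<^sup>2)" for s'
      by (simp add: loss_formula times_divide_eq_left[symmetric])
    then show ?thesis
      by (simp add: wqd_def)
  qed
qed

lemma bayes_consistent_wqd_eta_star:
  assumes f1: "integrable lborel f1" "integrable lborel (\<lambda>t. t * f1 t)"
      "\<And>t. f1 (mu1 + t) = f1 (mu1 - t)"
    and f2: "integrable lborel f2" "integrable lborel (\<lambda>t. t * f2 t)"
      "\<And>t. f2 (mu2 + t) = f2 (mu2 - t)"
  shows "bayes_consistent n f1 f2 (wqd mu1 mu2 w) (eta_star mu1 mu2)"
  unfolding bayes_consistent_def
proof (intro ballI allI conjI impI)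
  fix m x1 x2
  have [measurable]: "f1 \<in> borel_measurable borel" "f2 \<in> borel_measurable borel"
    using f1 f2 by auto
  have "(LINT t:{t. wqd mu1 mu2 w m x1 t = 1}|lborel. t * f2 t)
      = mu2 * (LINT t:{t. wqd mu1 mu2 w m x1 t = 1}|lborel. f2 t)"
    by (rule set_integral_mult_id_symmetric[OF f2]) (auto simp: wqd_def power2_commute)
  then show "0 < (LINT t:{t. wqd mu1 mu2 w m x1 t = 1}|lborel. f2 t) \<Longrightarrow>
      snd (eta_star mu1 mu2 (1, x1) m) = (LINT t:{t. wqd mu1 mu2 w m x1 t = 1}|lborel. t * f2 t)
        / (LINT t:{t. wqd mu1 mu2 w m x1 t = 1}|lborel. f2 t)"
    by (simp add: eta_star_def)
  have "(LINT t:{t. wqd mu1 mu2 w m t x2 = 2}|lborel. t * f1 t)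
      = mu1 * (LINT t:{t. wqd mu1 mu2 w m t x2 = 2}|lborel. f1 t)"
    by (rule set_integral_mult_id_symmetric[OF f1]) (auto simp: wqd_def power2_commute)
  then show "0 < (LINT t:{t. wqd mu1 mu2 w m t x2 = 2}|lborel. f1 t) \<Longrightarrow>
      fst (eta_star mu1 mu2 (2, x2) m) = (LINT t:{t. wqd mu1 mu2 w m t x2 = 2}|lborel. t * f1 t)
        / (LINT t:{t. wqd mu1 mu2 w m t x2 = 2}|lborel. f1 t)"
    by (simp add: eta_star_def)
qed (simp_all add: eta_star_def)

theorem theorem1:
  fixes n :: nat and f1 f2 p :: "real \<Rightarrow> real" and mu1 mu2 :: real
    and thr w :: "nat \<Rightarrow> real" and \<psi> :: "real \<Rightarrow> nat"
  assumes n: "n \<ge> 1"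
    and X1: "sym_full_density f1 mu1" and X2: "sym_full_density f2 mu2"
    and var1: "integrable lborel (\<lambda>x. x\<^sup>2 * f1 x)"
    and var2: "integrable lborel (\<lambda>x. x\<^sup>2 * f2 x)"
    and prior: "prior_density p"
    and A: "mppd n thr \<psi>"
    and B_range: "\<forall>m\<in>{1..n}. 0 \<le> w m \<and> w m \<le> 1"
    and B_mono: "\<forall>m\<in>{1..<n}. w m < w (Suc m)"
    and C1: "\<forall>m\<in>{1..<n}. Lw f1 f2 mu1 mu2 (w m) (thr m) = Lw f1 f2 mu1 mu2 (w (Suc m)) (thr m)"
    and C2: "\<forall>m\<in>{1..n}. w m = (LINT \<theta>:{thr (m - 1)<..<thr m}|lborel. \<theta> * p \<theta>)
                                  / (LINT \<theta>:{thr (m - 1)<..<thr m}|lborel. p \<theta>)"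
  shows "bne n f1 f2 p \<psi> (wqd mu1 mu2 w) (eta_star mu1 mu2)"
proof -
  have f1: "\<And>x. 0 \<le> f1 x" "integrable lborel f1" "\<And>t. f1 (mu1 + t) = f1 (mu1 - t)"
    and f2: "\<And>x. 0 \<le> f2 x" "integrable lborel f2" "\<And>t. f2 (mu2 + t) = f2 (mu2 - t)"
    using X1 X2 unfolding sym_full_density_def by auto
  note moments1 = integrable_moments_of_second_moment[OF f1(2) var1]
  note moments2 = integrable_moments_of_second_moment[OF f2(2) var2]
  interpret signal_densities f1 f2 mu1 mu2
    using f1 f2 moments1(2) moments2(2) by unfold_locales auto
  have "recv_loss f1 f2 (wqd mu1 mu2 w) (eta_star mu1 mu2) \<theta> (\<psi> \<theta>)
      \<le> recv_loss f1 f2 (wqd mu1 mu2 w) (eta_star mu1 mu2) \<theta> m"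
    if "\<theta> \<in> {0..1}" "m \<in> {1..n}" for \<theta> m
    using mppd_best_response[OF A that] B_mono C1 by (simp add: less_imp_le)
  moreover have "plat_loss p \<psi> (eta_star mu1 mu2) m x1 x2 (wqd mu1 mu2 w m x1 x2)
      \<le> plat_loss p \<psi> (eta_star mu1 mu2) m x1 x2 s" if "m \<in> {1..n}" for m x1 x2 s
    using wqd_best_response[OF prior A that] C2 that by blast
  moreover have "bayes_consistent n f1 f2 (wqd mu1 mu2 w) (eta_star mu1 mu2)"
    using bayes_consistent_wqd_eta_star f1 f2 moments1(1) moments2(1) by blast
  ultimately show ?thesis
    using mppd_closed_cell[OF A] by (simp add: bne_def wqd_def)
qed

end
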